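(* Let $\lambda>0$ and $X\sim\mathrm{ZTP}(\lambda)$. Then the Gini coefficient of $X$ is $$G = 1 - \frac{2e^{-\lambda}}{1-e^{-\lambda}}\int_0^\lambda I_0\big(2\sqrt{\lambda t}\big)\,e^{-t}\,dt + \frac{e^{-2\lambda}}{1-e^{-\lambda}}\, I_1(2\lambda).$$
   Context: A random variable $X$ has the zero-truncated Poisson distribution with parameter $\lambda>0$, written $X\sim\mathrm{ZTP}(\lambda)$, if $P_\lambda(k)=\mathbb{P}(X=k)=\frac{1}{1-e^{-\lambda}}\cdot\frac{e^{-\lambda}\lambda^k}{k!}$ for $k=1,2,\ldots$. Its mean is $\mu=\lambda/(1-e^{-\lambda})$. The Gini coefficient of a random variable $X$ with finite mean is $G=\frac12\,\mathbb{E}|X_1-X_2|/\mathbb{E}(X)$, where $X_1,X_2$ are independent copies of $X$. $I_\nu(z)=(z/2)^\nu\sum_{k\ge0}(z/2)^{2k}/[k!\,\Gamma(\nu+k+1)]$ is the modified Bessel function of the first kind of order $\nu$. *)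

theory Defs
  imports "HOL-Probability.Probability"
begin

definition ztp_density :: "real \<Rightarrow> nat \<Rightarrow> real" where
  "ztp_density lam k =
     (if k \<ge> 1 then (1 / (1 - exp (- lam))) * (exp (- lam) * lam ^ k / fact k) else 0)"

definition ztp_pmf :: "real \<Rightarrow> nat pmf" where
  "ztp_pmf lam = embed_pmf (ztp_density lam)"

definition gini :: "nat pmf \<Rightarrow> real" where
  "gini p = (1/2) * measure_pmf.expectation (pair_pmf p p) (\<lambda>(a, b). \<bar>real a - real b\<bar>)
              / measure_pmf.expectation p real"

definition bessel_I :: "nat \<Rightarrow> real \<Rightarrow> real" where
  "bessel_I n z = (z/2) ^ n * (\<Sum>k. (z/2) ^ (2*k) / (fact k * Gamma (real n + real k + 1)))"

end

theory Submission
  imports Defs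
begin

text \<open>Write p k for the Poisson(\<lambda>) weights, L n = \<Sum>k<n. p k for the distribution function,
  E = \<Sum>k. p k^2 and F = \<Sum>k. p k * p (k + 1). Truncating at zero removes the atom p 0 = e^(-\<lambda>) and
  rescales by 1 / (1 - e^(-\<lambda>)), so G = (E + F - e^(-\<lambda>)) / (1 - e^(-\<lambda>)) as soon as the Poisson mean
  absolute difference is known to be 2\<lambda>(E + F). That value comes from summing the telescoping
  identity p (j+1) * s (j+1) = \<lambda> (p j * L (j+1) - p (j+1) * L j) for the shortfall
  s j = \<Sum>k<j. p k * (j - k). On the Bessel side, e^(-2\<lambda>) I_1(2\<lambda>) = F term by term, while
  integrating the series of I_0 termwise against incomplete gamma integrals gives
  e^(-\<lambda>) \<integral>[0,\<lambda>] I_0(2\<surd>(\<lambda>t)) e^(-t) dt = 1 - \<Sum>k. p k * L (k+1) = (1 - E) / 2,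
  the last step by the symmetry of two independent Poisson variables.\<close>

definition poisson_weight :: "real \<Rightarrow> nat \<Rightarrow> real" where
  "poisson_weight l k = exp (- l) * l ^ k / fact k"

definition poisson_cdf_less :: "real \<Rightarrow> nat \<Rightarrow> real" where
  "poisson_cdf_less l n = (\<Sum>k<n. poisson_weight l k)"

lemma poisson_weight_sums: "poisson_weight l sums 1"
proof -
  have "(\<lambda>n. exp (- l) * (l ^ n /\<^sub>R fact n)) sums (exp (- l) * exp l)"
    by (intro sums_mult exp_converges)
  moreover have "poisson_weight l = (\<lambda>n. exp (- l) * (l ^ n /\<^sub>R fact n))"
    by (simp add: fun_eq_iff poisson_weight_def divide_inverse)
  ultimately show ?thesis by (simp add: exp_minus)
qed

lemma poisson_weight_Suc: "real (Suc k) * poisson_weight l (Suc k) = l * poisson_weight l k"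
  unfolding poisson_weight_def fact_Suc of_nat_mult by (simp add: field_simps del: of_nat_Suc)

lemma poisson_weight_nonneg: "l \<ge> 0 \<Longrightarrow> poisson_weight l k \<ge> 0"
  by (simp add: poisson_weight_def)

lemma poisson_weight_tendsto_0: "poisson_weight l \<longlonglongrightarrow> 0"
  using poisson_weight_sums summable_LIMSEQ_zero sums_summable by blast

lemma poisson_mean_sums: "(\<lambda>k. real k * poisson_weight l k) sums l"
proof -
  have "(\<lambda>k. real (Suc k) * poisson_weight l (Suc k)) sums (l * 1)"
    unfolding poisson_weight_Suc by (intro sums_mult poisson_weight_sums)
  then show ?thesis by (subst (asm) sums_Suc_iff) simp
qed

lemma poisson_cdf_less_Suc:
  "poisson_cdf_less l (Suc n) = poisson_cdf_less l n + poisson_weight l n"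
  by (simp add: poisson_cdf_less_def)

lemma poisson_cdf_less_tendsto_1: "poisson_cdf_less l \<longlonglongrightarrow> 1"
  using poisson_weight_sums unfolding sums_def poisson_cdf_less_def .

lemma poisson_cdf_less_bounds:
  assumes "l \<ge> 0" shows "0 \<le> poisson_cdf_less l n" "poisson_cdf_less l n \<le> 1"
proof -
  show "0 \<le> poisson_cdf_less l n"
    unfolding poisson_cdf_less_def by (intro sum_nonneg poisson_weight_nonneg assms)
  have "poisson_cdf_less l n \<le> suminf (poisson_weight l)"
    unfolding poisson_cdf_less_def
    by (rule sum_le_suminf) (use poisson_weight_sums assms poisson_weight_nonneg in \<open>auto simp: sums_iff\<close>)
  then show "poisson_cdf_less l n \<le> 1" using poisson_weight_sums by (simp add: sums_iff)
qed

lemma poisson_weight_le_1: "l \<ge> 0 \<Longrightarrow> poisson_weight l k \<le> 1"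
  using poisson_cdf_less_bounds(2)[of l "Suc k"] poisson_cdf_less_bounds(1)[of l k]
  by (simp add: poisson_cdf_less_Suc)

lemma summable_dominated_by_poisson_weight:
  assumes "l \<ge> 0" and "\<And>k. \<bar>f k\<bar> \<le> poisson_weight l k" shows "summable f"
  by (rule summable_comparison_test[of _ "poisson_weight l"])
     (use assms poisson_weight_sums in \<open>auto simp: sums_iff\<close>)

text \<open>For independent Y, Y' \<sim> Poisson(l) these are P(Y = Y'), P(Y' = Y + 1) and P(Y' \<le> Y).\<close>

definition poisson_tie :: "real \<Rightarrow> real" where
  "poisson_tie l = (\<Sum>k. poisson_weight l k * poisson_weight l k)"

definition poisson_step :: "real \<Rightarrow> real" where
  "poisson_step l = (\<Sum>k. poisson_weight l k * poisson_weight l (Suc k))"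

definition poisson_dominance :: "real \<Rightarrow> real" where
  "poisson_dominance l = (\<Sum>k. poisson_weight l k * poisson_cdf_less l (Suc k))"

lemma poisson_tie_sums:
  "l \<ge> 0 \<Longrightarrow> (\<lambda>k. poisson_weight l k * poisson_weight l k) sums poisson_tie l"
  unfolding poisson_tie_def
  by (intro summable_sums summable_dominated_by_poisson_weight[of l])
     (auto simp: poisson_weight_nonneg poisson_weight_le_1 mult_left_le)

lemma poisson_step_sums:
  "l \<ge> 0 \<Longrightarrow> (\<lambda>k. poisson_weight l k * poisson_weight l (Suc k)) sums poisson_step l"
  unfolding poisson_step_def
  by (intro summable_sums summable_dominated_by_poisson_weight[of l])
     (auto simp: poisson_weight_nonneg poisson_weight_le_1 mult_left_le)

lemma poisson_dominance_sums:
  "l \<ge> 0 \<Longrightarrow> (\<lambda>k. poisson_weight l k * poisson_cdf_less l (Suc k)) sums poisson_dominance l"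
  unfolding poisson_dominance_def
  by (intro summable_sums summable_dominated_by_poisson_weight[of l])
     (auto simp: poisson_weight_nonneg poisson_cdf_less_bounds mult_left_le)

text \<open>Sum L (n+1)^2 - L n^2 + p n^2 = 2 p n * L (n+1) over n.\<close>

lemma poisson_dominance_eq:
  assumes "l \<ge> 0" shows "2 * poisson_dominance l = 1 + poisson_tie l"
proof -
  have "(\<lambda>n. (poisson_cdf_less l n)\<^sup>2) \<longlonglongrightarrow> 1\<^sup>2"
    by (intro tendsto_intros poisson_cdf_less_tendsto_1)
  then have "(\<lambda>n. (poisson_cdf_less l (Suc n))\<^sup>2 - (poisson_cdf_less l n)\<^sup>2) sums (1 - 0)"
    using telescope_sums[of "\<lambda>n. (poisson_cdf_less l n)\<^sup>2" 1] by (simp add: poisson_cdf_less_def)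
  from sums_add[OF this poisson_tie_sums[OF assms]]
  have "(\<lambda>k. 2 * (poisson_weight l k * poisson_cdf_less l (Suc k))) sums (1 + poisson_tie l)"
    by (simp add: poisson_cdf_less_Suc power2_eq_square algebra_simps)
  moreover have "(\<lambda>k. 2 * (poisson_weight l k * poisson_cdf_less l (Suc k))) sums (2 * poisson_dominance l)"
    by (intro sums_mult poisson_dominance_sums assms)
  ultimately show ?thesis using sums_unique2 by metis
qed

definition poisson_shortfall :: "real \<Rightarrow> nat \<Rightarrow> real" where
  "poisson_shortfall l j = (\<Sum>k<j. poisson_weight l k * (real j - real k))"

lemma poisson_partial_mean:
  "(\<Sum>k<Suc i. real k * poisson_weight l k) = l * poisson_cdf_less l i"
proof (induction i)
  case 0
  then show ?case by (simp add: poisson_cdf_less_def)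
next
  case (Suc i)
  have "(\<Sum>k<Suc (Suc i). real k * poisson_weight l k)
      = (\<Sum>k<Suc i. real k * poisson_weight l k) + real (Suc i) * poisson_weight l (Suc i)"
    by (simp only: sum.lessThan_Suc)
  also have "\<dots> = l * poisson_cdf_less l i + real (Suc i) * poisson_weight l (Suc i)"
    by (simp only: Suc.IH)
  also have "\<dots> = l * poisson_cdf_less l (Suc i)"
    by (simp only: poisson_weight_Suc poisson_cdf_less_Suc algebra_simps)
  finally show ?case .
qed

lemma poisson_shortfall_eq:
  "poisson_shortfall l (Suc i) = real (Suc i) * poisson_cdf_less l (Suc i) - l * poisson_cdf_less l i"
proof -
  have "poisson_shortfall l (Suc i)
      = real (Suc i) * poisson_cdf_less l (Suc i) - (\<Sum>k<Suc i. real k * poisson_weight l k)"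
    unfolding poisson_shortfall_def poisson_cdf_less_def
    by (simp add: algebra_simps sum_subtractf sum_distrib_left)
  then show ?thesis by (simp only: poisson_partial_mean)
qed

lemma poisson_weight_shortfall_Suc:
  "poisson_weight l (Suc i) * poisson_shortfall l (Suc i)
     = l * (poisson_weight l i * poisson_cdf_less l (Suc i) - poisson_weight l (Suc i) * poisson_cdf_less l i)"
proof -
  have "poisson_weight l (Suc i) * poisson_shortfall l (Suc i)
      = (real (Suc i) * poisson_weight l (Suc i)) * poisson_cdf_less l (Suc i)
          - l * poisson_weight l (Suc i) * poisson_cdf_less l i"
    unfolding poisson_shortfall_eq by (simp only: algebra_simps)
  then show ?thesis by (simp only: poisson_weight_Suc algebra_simps)
qed

lemma poisson_weight_shortfall_sums:
  assumes "l \<ge> 0"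
  shows "(\<lambda>j. poisson_weight l j * poisson_shortfall l j) sums (l * (poisson_tie l + poisson_step l))"
proof -
  let ?p = "poisson_weight l" and ?L = "poisson_cdf_less l"
  have "(\<lambda>n. ?p n * ?L (Suc n)) \<longlonglongrightarrow> 0 * 1"
    by (intro tendsto_intros poisson_weight_tendsto_0)
       (use poisson_cdf_less_tendsto_1 LIMSEQ_Suc in blast)
  then have tele: "(\<lambda>n. ?p n * ?L (Suc n) - ?p (Suc n) * ?L (Suc (Suc n))) sums (?p 0 * ?L 1)"
    using telescope_sums'[of "\<lambda>n. ?p n * ?L (Suc n)" 0] by simp
  have tie: "(\<lambda>n. ?p (Suc n) * ?p (Suc n)) sums (poisson_tie l - ?p 0 * ?p 0)"
    using poisson_tie_sums[OF assms] by (subst sums_Suc_iff) simp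
  have "(\<lambda>n. l * ((?p n * ?L (Suc n) - ?p (Suc n) * ?L (Suc (Suc n)))
          + ?p (Suc n) * ?p (Suc n) + ?p n * ?p (Suc n)))
        sums (l * (?p 0 * ?L 1 + (poisson_tie l - ?p 0 * ?p 0) + poisson_step l))"
    by (intro sums_mult sums_add tele tie poisson_step_sums assms)
  moreover have "(\<lambda>n. l * ((?p n * ?L (Suc n) - ?p (Suc n) * ?L (Suc (Suc n)))
          + ?p (Suc n) * ?p (Suc n) + ?p n * ?p (Suc n)))
      = (\<lambda>i. ?p (Suc i) * poisson_shortfall l (Suc i))"
    by (rule ext, simp only: poisson_weight_shortfall_Suc poisson_cdf_less_Suc)
       (simp add: algebra_simps)
  moreover have "?L 1 = ?p 0" by (simp add: poisson_cdf_less_def)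
  ultimately have "(\<lambda>i. ?p (Suc i) * poisson_shortfall l (Suc i)) sums (l * (poisson_tie l + poisson_step l))"
    by simp
  then show ?thesis by (subst (asm) sums_Suc_iff) (simp add: poisson_shortfall_def)
qed

text \<open>\<bar>a - k\<bar> = (k - a) + 2 max (a - k) 0.\<close>

lemma poisson_abs_dev_sums:
  "(\<lambda>k. poisson_weight l k * \<bar>real a - real k\<bar>) sums (l - real a + 2 * poisson_shortfall l a)"
proof -
  have "(\<lambda>k. if k < a then poisson_weight l k * (real a - real k) else 0) sums poisson_shortfall l a"
    using sums_finite[of "{..<a}" "\<lambda>k. if k < a then poisson_weight l k * (real a - real k) else 0"]
    by (simp add: poisson_shortfall_def)
  then have "(\<lambda>k. real k * poisson_weight l k - poisson_weight l k * real a
               + 2 * (if k < a then poisson_weight l k * (real a - real k) else 0))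
             sums (l - 1 * real a + 2 * poisson_shortfall l a)"
    by (intro sums_add sums_diff sums_mult poisson_mean_sums sums_mult2 poisson_weight_sums)
  moreover have "(\<lambda>k. real k * poisson_weight l k - poisson_weight l k * real a
               + 2 * (if k < a then poisson_weight l k * (real a - real k) else 0))
             = (\<lambda>k. poisson_weight l k * \<bar>real a - real k\<bar>)"
    by (auto simp: fun_eq_iff algebra_simps)
  ultimately show ?thesis by simp
qed

lemma poisson_mean_abs_diff_sums:
  assumes "l \<ge> 0"
  shows "(\<lambda>a. poisson_weight l a * (l - real a + 2 * poisson_shortfall l a))
           sums (2 * l * (poisson_tie l + poisson_step l))"
proof -
  have "(\<lambda>a. l * poisson_weight l a - real a * poisson_weight l a
             + 2 * (poisson_weight l a * poisson_shortfall l a))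
        sums (l * 1 - l + 2 * (l * (poisson_tie l + poisson_step l)))"
    by (intro sums_add sums_diff sums_mult poisson_weight_sums poisson_mean_sums
          poisson_weight_shortfall_sums assms)
  then show ?thesis by (simp add: algebra_simps)
qed

lemma exp_partial_sum_has_real_derivative:
  "((\<lambda>t. \<Sum>m\<le>k. t ^ m / fact m) has_real_derivative (\<Sum>m<k. t ^ m / fact m)) (at t)"
proof (induction k)
  case 0
  show ?case by simp
next
  case (Suc k)
  have "((\<lambda>t. t ^ Suc k / fact (Suc k)) has_real_derivative real (Suc k) * t ^ k / fact (Suc k)) (at t)"
    using DERIV_cdivide[OF DERIV_pow[of "Suc k" t], of "fact (Suc k)"] by simp
  from DERIV_add[OF Suc.IH this]
  have "((\<lambda>t. (\<Sum>m\<le>k. t ^ m / fact m) + t ^ Suc k / fact (Suc k)) has_real_derivative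
          (\<Sum>m<k. t ^ m / fact m) + real (Suc k) * t ^ k / fact (Suc k)) (at t)" .
  moreover have "real (Suc k) * t ^ k / fact (Suc k) = t ^ k / fact k"
    by (simp add: fact_Suc del: of_nat_Suc)
  ultimately show ?case by simp
qed

lemma exp_neg_power_antiderivative:
  "((\<lambda>t. - fact k * (exp (- t) * (\<Sum>m\<le>k. t ^ m / fact m))) has_real_derivative exp (- t) * t ^ k) (at t)"
proof -
  have "((\<lambda>t. exp (- t)) has_real_derivative - exp (- t)) (at t)"
    by (auto intro!: derivative_eq_intros)
  from DERIV_cmult[OF DERIV_mult[OF this exp_partial_sum_has_real_derivative], of "- fact k"]
  have "((\<lambda>t. - fact k * (exp (- t) * (\<Sum>m\<le>k. t ^ m / fact m))) has_real_derivative
          fact k * exp (- t) * ((\<Sum>m\<le>k. t ^ m / fact m) - (\<Sum>m<k. t ^ m / fact m))) (at t)"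
    by (simp add: algebra_simps)
  moreover have "(\<Sum>m\<le>k. t ^ m / fact m) - (\<Sum>m<k. t ^ m / fact m) = t ^ k / fact k"
    by (simp add: lessThan_Suc_atMost[symmetric])
  ultimately show ?thesis by simp
qed

lemma exp_neg_power_has_integral:
  fixes b :: real
  assumes "b \<ge> 0"
  shows "((\<lambda>t. exp (- t) * t ^ k) has_integral
           fact k * (1 - exp (- b) * (\<Sum>m\<le>k. b ^ m / fact m))) {0..b}"
proof -
  define F where "F t = - fact k * (exp (- t) * (\<Sum>m\<le>k. t ^ m / fact m))" for t :: real
  have "((\<lambda>t. exp (- t) * t ^ k) has_integral F b - F 0) {0..b}"
    unfolding F_def using exp_neg_power_antiderivative
    by (intro fundamental_theorem_of_calculus[OF assms])
       (simp add: has_real_derivative_iff_has_vector_derivative[symmetric] has_field_derivative_at_within)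
  moreover have "(\<Sum>m\<le>k. (0::real) ^ m / fact m) = 1"
    by (induction k) auto
  ultimately show ?thesis by (simp add: F_def right_diff_distrib)
qed

lemma has_integral_sums_nonneg:
  fixes f :: "nat \<Rightarrow> 'n::euclidean_space \<Rightarrow> real"
  assumes integral: "\<And>k. (f k has_integral c k) S"
    and nonneg: "\<And>k x. x \<in> S \<Longrightarrow> f k x \<ge> 0"
    and summable: "summable c"
    and series: "\<And>x. x \<in> S \<Longrightarrow> (\<lambda>k. f k x) sums g x"
  shows "(g has_integral suminf c) S"
proof -
  define F where "F n x = (\<Sum>k<n. f k x)" for n x
  have F_integral: "(F n has_integral (\<Sum>k<n. c k)) S" for n
    unfolding F_def by (intro has_integral_sum integral) auto
  then have integral_F: "(\<lambda>n. integral S (F n)) = (\<lambda>n. \<Sum>k<n. c k)"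
    by (auto simp: fun_eq_iff integral_unique)
  have partial_sums: "(\<lambda>n. integral S (F n)) \<longlonglongrightarrow> suminf c"
    unfolding integral_F by (rule summable_LIMSEQ[OF summable])
  have "g integrable_on S \<and> (\<lambda>n. integral S (F n)) \<longlonglongrightarrow> integral S g"
  proof (rule monotone_convergence_increasing)
    show "F n integrable_on S" for n using F_integral by blast
    show "F n x \<le> F (Suc n) x" if "x \<in> S" for n x
      using nonneg[OF that, of n] by (simp add: F_def)
    show "(\<lambda>n. F n x) \<longlonglongrightarrow> g x" if "x \<in> S" for x
      using series[OF that] by (simp add: F_def sums_def)
    show "bounded (range (\<lambda>n. integral S (F n)))"
      by (rule convergent_imp_bounded[OF partial_sums])
  qed
  with partial_sums show ?thesis
    using LIMSEQ_unique has_integral_integrable_integral by blast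
qed

lemma bessel_I_0_sums:
  assumes "x \<ge> 0"
  shows "(\<lambda>k. x ^ k / (fact k * fact k)) sums bessel_I 0 (2 * sqrt x)"
proof -
  have "summable (\<lambda>k. x ^ k / (fact k * fact k))"
  proof (rule summable_comparison_test[of _ "\<lambda>k. x ^ k /\<^sub>R fact k"])
    show "summable (\<lambda>k. x ^ k /\<^sub>R fact k)"
      using exp_converges sums_summable by blast
    have "x ^ k / (fact k * fact k) \<le> x ^ k / fact k" for k
      using assms by (intro divide_left_mono) (auto simp: fact_ge_1 fact_ge_self)
    then show "\<exists>N. \<forall>n\<ge>N. norm (x ^ n / (fact n * fact n)) \<le> x ^ n /\<^sub>R fact n"
      using assms by (intro exI[of _ 0]) (auto simp: divide_inverse mult.commute)
  qed
  moreover have "(2 * sqrt x / 2) ^ (2 * k) / (fact k * Gamma (real 0 + real k + 1))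
      = x ^ k / (fact k * fact k)" for k
    using assms Gamma_fact[of k, where 'a = real] by (simp add: power_mult add.commute)
  ultimately show ?thesis by (simp add: bessel_I_def summable_sums)
qed

lemma bessel_I_1_eq_poisson_step:
  assumes "l > 0"
  shows "exp (- l) * exp (- l) * bessel_I 1 (2 * l) = poisson_step l"
proof -
  have bessel_term: "(2 * l / 2) ^ (2 * k) / (fact k * Gamma (real 1 + real k + 1))
      = l ^ (2 * k) / (fact k * fact (Suc k))" for k
    using Gamma_fact[of "Suc k", where 'a = real] by (simp add: add.commute add.left_commute)
  have "(\<lambda>k. poisson_weight l k * poisson_weight l (Suc k) / (exp (- l) * exp (- l) * l))
          sums (poisson_step l / (exp (- l) * exp (- l) * l))"
    using poisson_step_sums assms by (intro sums_divide) auto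
  moreover have "poisson_weight l k * poisson_weight l (Suc k) / (exp (- l) * exp (- l) * l)
      = l ^ (2 * k) / (fact k * fact (Suc k))" for k
    using assms by (simp add: poisson_weight_def power_add[symmetric] mult_2 del: fact_Suc)
  ultimately have "(\<lambda>k. l ^ (2 * k) / (fact k * fact (Suc k)))
      sums (poisson_step l / (exp (- l) * exp (- l) * l))"
    by (simp only:)
  then show ?thesis
    unfolding bessel_I_def bessel_term using assms by (simp add: sums_iff)
qed

lemma bessel_I_0_exp_has_integral:
  assumes "l \<ge> 0"
  shows "((\<lambda>t. bessel_I 0 (2 * sqrt (l * t)) * exp (- t)) has_integral
           (\<Sum>k. l ^ k / fact k * (1 - poisson_cdf_less l (Suc k)))) {0..l}"
proof (rule has_integral_sums_nonneg[where f = "\<lambda>k t. l ^ k / (fact k * fact k) * (exp (- t) * t ^ k)"])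
  let ?c = "\<lambda>k. l ^ k / fact k * (1 - poisson_cdf_less l (Suc k))"
  have cdf_Suc: "poisson_cdf_less l (Suc k) = exp (- l) * (\<Sum>m\<le>k. l ^ m / fact m)" for k
    unfolding poisson_cdf_less_def poisson_weight_def lessThan_Suc_atMost
    by (simp add: sum_distrib_left)
  show "((\<lambda>t. l ^ k / (fact k * fact k) * (exp (- t) * t ^ k)) has_integral ?c k) {0..l}" for k
    using has_integral_mult_right[OF exp_neg_power_has_integral[OF assms, of k], of "l ^ k / (fact k * fact k)"]
    by (simp add: cdf_Suc)
  have c_bounds: "0 \<le> ?c k" "?c k \<le> l ^ k / fact k" for k
    using poisson_cdf_less_bounds[OF assms, of "Suc k"] assms by (simp, intro mult_left_le) auto
  show "summable ?c"
  proof (rule summable_comparison_test[of _ "\<lambda>k. l ^ k /\<^sub>R fact k"])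
    show "summable (\<lambda>k. l ^ k /\<^sub>R fact k)"
      using exp_converges sums_summable by blast
    show "\<exists>N. \<forall>n\<ge>N. norm (?c n) \<le> l ^ n /\<^sub>R fact n"
      using c_bounds by (auto simp: divide_inverse mult.commute)
  qed
  show "(\<lambda>k. l ^ k / (fact k * fact k) * (exp (- t) * t ^ k)) sums
          (bessel_I 0 (2 * sqrt (l * t)) * exp (- t))" if "t \<in> {0..l}" for t
  proof -
    have "(\<lambda>k. (l * t) ^ k / (fact k * fact k) * exp (- t)) sums
            (bessel_I 0 (2 * sqrt (l * t)) * exp (- t))"
      using that assms by (intro sums_mult2 bessel_I_0_sums) simp
    moreover have "(\<lambda>k. (l * t) ^ k / (fact k * fact k) * exp (- t))
        = (\<lambda>k. l ^ k / (fact k * fact k) * (exp (- t) * t ^ k))"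
      by (auto simp: fun_eq_iff power_mult_distrib)
    ultimately show ?thesis by simp
  qed
qed (use assms in auto)

lemma bessel_I_0_integral_eq:
  assumes "l \<ge> 0"
  shows "exp (- l) * integral {0..l} (\<lambda>t. bessel_I 0 (2 * sqrt (l * t)) * exp (- t))
           = 1 - poisson_dominance l"
proof -
  define c where "c = (\<lambda>k. l ^ k / fact k * (1 - poisson_cdf_less l (Suc k)))"
  have "poisson_weight l k * 1 - poisson_weight l k * poisson_cdf_less l (Suc k) = exp (- l) * c k" for k
    by (simp add: poisson_weight_def c_def right_diff_distrib diff_divide_distrib)
  then have "(\<lambda>k. exp (- l) * c k) sums (1 - poisson_dominance l)"
    using sums_diff[OF poisson_weight_sums[of l] poisson_dominance_sums[OF assms]] by simp
  then have "exp (- l) * suminf c = 1 - poisson_dominance l"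
    by (auto simp: sums_iff summable_cmult_iff suminf_mult[symmetric])
  then show ?thesis
    using integral_unique[OF bessel_I_0_exp_has_integral[OF assms, folded c_def]] by simp
qed

lemma nn_integral_pmf_nat_sums:
  fixes M :: "nat pmf"
  assumes "\<And>k. f k \<ge> 0" and "(\<lambda>k. pmf M k * f k) sums s"
  shows "(\<integral>\<^sup>+x. ennreal (f x) \<partial>M) = ennreal s"
proof -
  have "(\<integral>\<^sup>+x. ennreal (f x) \<partial>M) = (\<integral>\<^sup>+x. ennreal (pmf M x * f x) \<partial>count_space UNIV)"
    unfolding nn_integral_measure_pmf
    by (intro nn_integral_cong) (simp add: ennreal_mult assms(1))
  also have "\<dots> = (\<Sum>x. ennreal (pmf M x * f x))"
    by (rule nn_integral_count_space_nat)
  also have "\<dots> = ennreal s"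
    by (rule suminf_ennreal_eq) (use assms in auto)
  finally show ?thesis .
qed

lemma expectation_pmf_nat_sums:
  fixes M :: "nat pmf"
  assumes "\<And>k. f k \<ge> 0" and "(\<lambda>k. pmf M k * f k) sums s"
  shows "measure_pmf.expectation M f = s"
proof -
  have "s \<ge> 0"
    using sums_le[OF _ sums_zero assms(2)] assms(1) by simp
  then show ?thesis
    using nn_integral_pmf_nat_sums[OF assms] assms(1)
    by (subst integral_eq_nn_integral) auto
qed

lemma expectation_pair_pmf_nat_sums:
  fixes M N :: "nat pmf" and f :: "nat \<Rightarrow> nat \<Rightarrow> real"
  assumes nonneg: "\<And>a b. f a b \<ge> 0"
    and inner: "\<And>a. (\<lambda>b. pmf N b * f a b) sums v a"
    and outer: "(\<lambda>a. pmf M a * v a) sums s"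
  shows "measure_pmf.expectation (pair_pmf M N) (\<lambda>(a, b). f a b) = s"
proof -
  have v_nonneg: "v a \<ge> 0" for a
    using sums_le[OF _ sums_zero inner[of a]] nonneg by simp
  have "s \<ge> 0"
    using sums_le[OF _ sums_zero outer] v_nonneg by simp
  have "(\<integral>\<^sup>+x. ennreal ((\<lambda>(a, b). f a b) x) \<partial>pair_pmf M N)
      = (\<integral>\<^sup>+a. \<integral>\<^sup>+b. ennreal (f a b) \<partial>N \<partial>M)"
    by (subst nn_integral_pair_pmf') simp
  also have "\<dots> = (\<integral>\<^sup>+a. ennreal (v a) \<partial>M)"
    by (intro nn_integral_cong nn_integral_pmf_nat_sums nonneg inner)
  also have "\<dots> = ennreal s"
    by (intro nn_integral_pmf_nat_sums v_nonneg outer)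
  finally show ?thesis
    using \<open>s \<ge> 0\<close> nonneg by (subst integral_eq_nn_integral) auto
qed

lemma pmf_ztp_pmf:
  assumes "l > 0"
  shows "pmf (ztp_pmf l) k = (if k = 0 then 0 else poisson_weight l k / (1 - exp (- l)))"
proof -
  have q: "exp (- l) < 1" using assms by simp
  have density_eq: "ztp_density l = (\<lambda>k. if k = 0 then 0 else poisson_weight l k / (1 - exp (- l)))"
    by (auto simp: fun_eq_iff ztp_density_def poisson_weight_def Suc_le_eq)
  have nonneg: "ztp_density l k \<ge> 0" for k
    using assms q by (simp add: density_eq poisson_weight_nonneg)
  have "(\<lambda>k. poisson_weight l k / (1 - exp (- l)) - (if k = 0 then exp (- l) / (1 - exp (- l)) else 0))
      sums (1 / (1 - exp (- l)) - exp (- l) / (1 - exp (- l)))"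
    by (intro sums_diff sums_divide poisson_weight_sums sums_single)
  moreover have "1 / (1 - exp (- l)) - exp (- l) / (1 - exp (- l)) = 1"
    using q by (simp add: diff_divide_distrib[symmetric])
  ultimately have density_sums: "ztp_density l sums 1"
    by (simp add: density_eq poisson_weight_def if_distrib cong: if_cong)
  then have "(\<integral>\<^sup>+k. ennreal (ztp_density l k) \<partial>count_space UNIV) = 1"
    using suminf_ennreal_eq[OF nonneg density_sums] by (simp add: nn_integral_count_space_nat)
  then show ?thesis
    unfolding ztp_pmf_def using nonneg by (subst pmf_embed_pmf) (auto simp: density_eq)
qed

lemma ztp_mean:
  assumes "l > 0"
  shows "measure_pmf.expectation (ztp_pmf l) real = l / (1 - exp (- l))"
proof (rule expectation_pmf_nat_sums)
  have "(\<lambda>k. real k * poisson_weight l k / (1 - exp (- l))) sums (l / (1 - exp (- l)))"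
    by (intro sums_divide poisson_mean_sums)
  moreover have "real k * poisson_weight l k / (1 - exp (- l)) = pmf (ztp_pmf l) k * real k" for k
    using assms by (simp add: pmf_ztp_pmf)
  ultimately show "(\<lambda>k. pmf (ztp_pmf l) k * real k) sums (l / (1 - exp (- l)))"
    by simp
qed simp

lemma ztp_abs_dev_sums:
  assumes "l > 0"
  shows "(\<lambda>b. pmf (ztp_pmf l) b * \<bar>real a - real b\<bar>)
           sums ((l - real a + 2 * poisson_shortfall l a - exp (- l) * real a) / (1 - exp (- l)))"
proof -
  have "(\<lambda>b. (poisson_weight l b * \<bar>real a - real b\<bar> - (if b = 0 then exp (- l) * real a else 0))
           / (1 - exp (- l)))
        sums ((l - real a + 2 * poisson_shortfall l a - exp (- l) * real a) / (1 - exp (- l)))"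
    by (intro sums_divide sums_diff poisson_abs_dev_sums sums_single)
  moreover have "(poisson_weight l b * \<bar>real a - real b\<bar> - (if b = 0 then exp (- l) * real a else 0))
        / (1 - exp (- l)) = pmf (ztp_pmf l) b * \<bar>real a - real b\<bar>" for b
    using assms by (simp add: pmf_ztp_pmf poisson_weight_def)
  ultimately show ?thesis by simp
qed

text \<open>One of the two terms e^(-\<lambda>) \<lambda> comes from the inner sums, the other from the Poisson
  term at a = 0, namely p 0 * \<lambda> = e^(-\<lambda>) \<lambda>, which truncation removes.\<close>

lemma ztp_mean_abs_diff:
  assumes "l > 0"
  shows "measure_pmf.expectation (pair_pmf (ztp_pmf l) (ztp_pmf l)) (\<lambda>(a, b). \<bar>real a - real b\<bar>)
           = 2 * l * (poisson_tie l + poisson_step l - exp (- l)) / (1 - exp (- l))\<^sup>2"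
proof (rule expectation_pair_pmf_nat_sums[OF _ ztp_abs_dev_sums[OF assms]])
  let ?p = "poisson_weight l" and ?q = "exp (- l)"
  have "(\<lambda>a. (?p a * (l - real a + 2 * poisson_shortfall l a) - ?q * (real a * ?p a)
              - (if a = 0 then ?q * l else 0)) / (1 - ?q)\<^sup>2)
        sums ((2 * l * (poisson_tie l + poisson_step l) - ?q * l - ?q * l) / (1 - ?q)\<^sup>2)"
    using assms
    by (intro sums_divide sums_diff sums_mult poisson_mean_abs_diff_sums poisson_mean_sums sums_single)
       simp
  moreover have "(?p a * (l - real a + 2 * poisson_shortfall l a) - ?q * (real a * ?p a)
              - (if a = 0 then ?q * l else 0)) / (1 - ?q)\<^sup>2
      = pmf (ztp_pmf l) a * ((l - real a + 2 * poisson_shortfall l a - ?q * real a) / (1 - ?q))" for a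
  proof (cases "a = 0")
    case True
    with assms show ?thesis by (simp add: pmf_ztp_pmf poisson_weight_def poisson_shortfall_def)
  next
    case False
    have "1 - ?q \<noteq> 0" using assms by simp
    with False assms show ?thesis
      by (simp add: pmf_ztp_pmf power2_eq_square field_simps)
  qed
  ultimately show "(\<lambda>a. pmf (ztp_pmf l) a * ((l - real a + 2 * poisson_shortfall l a - ?q * real a) / (1 - ?q)))
      sums (2 * l * (poisson_tie l + poisson_step l - ?q) / (1 - ?q)\<^sup>2)"
    by (simp add: algebra_simps)
qed simp

lemma gini_ztp_pmf:
  assumes "l > 0"
  shows "gini (ztp_pmf l) = (poisson_tie l + poisson_step l - exp (- l)) / (1 - exp (- l))"
proof -
  have "1 - exp (- l) \<noteq> 0" using assms by simp
  with assms show ?thesis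
    by (simp add: gini_def ztp_mean ztp_mean_abs_diff power2_eq_square)
qed

theorem mainTheorem1:
  fixes lam :: real
  assumes "lam > 0"
  shows "gini (ztp_pmf lam) =
           1 - (2 * exp (- lam) / (1 - exp (- lam)))
                 * integral {0..lam} (\<lambda>t. bessel_I 0 (2 * sqrt (lam * t)) * exp (- t))
             + (exp (- 2 * lam) / (1 - exp (- lam))) * bessel_I 1 (2 * lam)"
proof -
  define q where "q = exp (- lam)"
  have "1 - q \<noteq> 0" using assms by (simp add: q_def)
  have integral_term:
    "2 * q / (1 - q) * integral {0..lam} (\<lambda>t. bessel_I 0 (2 * sqrt (lam * t)) * exp (- t))
       = (1 - poisson_tie lam) / (1 - q)"
    using bessel_I_0_integral_eq[of lam] poisson_dominance_eq[of lam] assms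
    by (simp add: q_def)
  have bessel_term: "exp (- 2 * lam) / (1 - q) * bessel_I 1 (2 * lam) = poisson_step lam / (1 - q)"
    using bessel_I_1_eq_poisson_step[OF assms] by (simp add: exp_add[symmetric])
  have "gini (ztp_pmf lam) = (poisson_tie lam + poisson_step lam - q) / (1 - q)"
    using gini_ztp_pmf[OF assms] by (simp add: q_def)
  also have "\<dots> = ((1 - q) - (1 - poisson_tie lam) + poisson_step lam) / (1 - q)"
    by (simp add: algebra_simps)
  also have "\<dots> = 1 - (1 - poisson_tie lam) / (1 - q) + poisson_step lam / (1 - q)"
    by (simp only: add_divide_distrib diff_divide_distrib[of "1 - q"] divide_self[OF \<open>1 - q \<noteq> 0\<close>])
  finally show ?thesis
    unfolding q_def[symmetric] integral_term bessel_term .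
qed

end
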